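(* Let $\mathcal{H}$ be a real Hilbert space, let $A:\mathcal{H}\rightrightarrows\mathcal{H}$ be maximal monotone with $A^{-1}(0)\neq\emptyset$, let $\theta>0$, let $p\geq1$ be an integer, and let $(x,\lambda):[0,+\infty)\to\mathcal{H}\times(0,+\infty)$ be a global solution of \[ \dot{x}(t)+x(t)-(I+\lambda(t)A)^{-1}x(t)=0,\qquad \lambda(t)\,\|(I+\lambda(t)A)^{-1}x(t)-x(t)\|^{p-1}=\theta, \] with $x(0)\in\{x\in\mathcal{H}:0\notin Ax\}$. Assume the error bound condition: there exist $\delta>0$ and $\kappa>0$ such that for all $x\in\mathcal{H}$, $\textsc{dist}(0,Ax)\leq\delta$ implies $\textsc{dist}(x,A^{-1}(0))\leq\kappa\,\textsc{dist}(0,Ax)$. Then there exist a sufficiently large $t_0>0$ and a constant $c>0$ with $c\leq 2\left(1+\frac{\kappa}{\lambda(0)}\right)^{-2}$ such that $\textsc{dist}(x(t),A^{-1}(0))=O(e^{-ct/2})$ for all $t>t_0$.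
   Context: $\textsc{dist}(x,S)=\inf_{z\in S}\|x-z\|$; $A^{-1}(0)=\{x:0\in Ax\}$; $(I+\lambda A)^{-1}$ is the resolvent of $A$ of index $\lambda$. *)

theory Defs
  imports "HOL-Analysis.Analysis"
begin

definition monotone_op :: "('a::real_inner \<Rightarrow> 'a set) \<Rightarrow> bool" where
  "monotone_op A \<longleftrightarrow>
     (\<forall>x y u v. u \<in> A x \<longrightarrow> v \<in> A y \<longrightarrow> inner (x - y) (u - v) \<ge> 0)"

definition maximal_monotone :: "('a::real_inner \<Rightarrow> 'a set) \<Rightarrow> bool" where
  "maximal_monotone A \<longleftrightarrow> monotone_op A \<and>
     (\<forall>B. monotone_op B \<and> (\<forall>x. A x \<subseteq> B x) \<longrightarrow> B = A)"

definition zeros :: "('a::real_vector \<Rightarrow> 'a set) \<Rightarrow> 'a set" where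
  "zeros A = {x. 0 \<in> A x}"

text \<open>Resolvent (I + lambda A)^{-1} x: the (unique, for maximal monotone A and lambda > 0)
  y with x \<in> y + lambda A y.\<close>
definition resolvent :: "('a::real_vector \<Rightarrow> 'a set) \<Rightarrow> real \<Rightarrow> 'a \<Rightarrow> 'a" where
  "resolvent A lam x = (THE y. \<exists>u \<in> A y. x = y + lam *\<^sub>R u)"

end

theory Submission
  imports Defs
begin

(* With J the resolvent of A at the current step size, monotonicity gives <J - z, x - J> >= 0
   for every zero z of A, so along the flow d/dt |x - z|^2 = 2 <x - z, J - x> <= -2 |J - x|^2.
   The trajectory and the residual J - x therefore stay bounded, the algebraic constraint keeps
   the step size away from 0, and the error bound gives c dist(x, A^-1(0))^2 <= |J - x|^2 for a
   uniform c > 0.  Integrating over unit time intervals yields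
   (1 + 2c) dist(x(t + 1), A^-1(0))^2 <= dist(x(t), A^-1(0))^2, hence exponential decay.

   That the resolvent is defined everywhere is Minty's theorem.  Its core is the Debrunner-Flor
   lemma: for a monotone set G of pairs and any x, some y satisfies <y - a, x - y - b> >= 0 for
   all (a, b) in G, i.e. y lies in every closed ball with diameter [a, x - b].  For finite G a
   common point is found by maximising the concave function k - |m|^2 over the convex hull of the
   pairs (centre, |centre|^2 - radius^2); for infinite G a finite intersection argument for
   bounded closed convex sets replaces weak compactness. *)

section \<open>Minty's theorem\<close>

lemma mem_cball_diameter_iff:
  fixes y a e :: "'a::real_inner"
  shows "y \<in> cball (midpoint a e) (dist a e / 2) \<longleftrightarrow> 0 \<le> inner (y - a) (e - y)"
proof -
  have sq: "(dist (midpoint a e) y)\<^sup>2 = (dist a e / 2)\<^sup>2 - inner (y - a) (e - y)"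
    unfolding midpoint_def dist_norm power_divide power2_norm_eq_inner
    by (simp add: inner_add_left inner_add_right inner_diff_left inner_diff_right inner_commute
        algebra_simps) (simp add: field_simps)
  have "dist (midpoint a e) y \<le> dist a e / 2 \<longleftrightarrow> (dist (midpoint a e) y)\<^sup>2 \<le> (dist a e / 2)\<^sup>2"
    by (simp add: abs_le_square_iff[symmetric])
  then show ?thesis
    using sq by simp
qed

lemma inner_convex_combination_le:
  fixes a b :: "'i \<Rightarrow> 'a::real_inner"
  assumes "finite I"
    and mono: "\<And>i j. i \<in> I \<Longrightarrow> j \<in> I \<Longrightarrow> 0 \<le> inner (a i - a j) (b i - b j)"
    and \<mu>: "\<And>i. i \<in> I \<Longrightarrow> 0 \<le> \<mu> i" "sum \<mu> I = 1"
  shows "inner (\<Sum>i\<in>I. \<mu> i *\<^sub>R a i) (\<Sum>i\<in>I. \<mu> i *\<^sub>R b i) \<le> (\<Sum>i\<in>I. \<mu> i * inner (a i) (b i))"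
proof -
  let ?S = "\<lambda>f. \<Sum>i\<in>I. \<Sum>j\<in>I. \<mu> i * \<mu> j * f i j"
  have diag: "?S (\<lambda>i j. inner (a i) (b i)) = (\<Sum>i\<in>I. \<mu> i * inner (a i) (b i))"
    by (simp add: sum_distrib_right[symmetric] sum_distrib_left[symmetric] mult.commute \<mu>(2))
  have diag': "?S (\<lambda>i j. inner (a j) (b j)) = ?S (\<lambda>i j. inner (a i) (b i))"
    by (subst sum.swap) (simp add: mult.commute)
  have cross: "?S (\<lambda>i j. inner (a i) (b j)) = inner (\<Sum>i\<in>I. \<mu> i *\<^sub>R a i) (\<Sum>i\<in>I. \<mu> i *\<^sub>R b i)"
    by (simp add: inner_sum_left inner_sum_right sum_distrib_left mult.assoc, subst sum.swap,
        simp add: mult.left_commute)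
  have cross': "?S (\<lambda>i j. inner (a j) (b i)) = ?S (\<lambda>i j. inner (a i) (b j))"
    by (subst sum.swap) (simp add: mult.commute)
  have "0 \<le> ?S (\<lambda>i j. inner (a i - a j) (b i - b j))"
    by (intro sum_nonneg) (simp add: \<mu> mono)
  also have "\<dots> = ?S (\<lambda>i j. inner (a i) (b i)) + ?S (\<lambda>i j. inner (a j) (b j))
      - ?S (\<lambda>i j. inner (a i) (b j)) - ?S (\<lambda>i j. inner (a j) (b i))"
    by (simp add: sum.distrib sum_subtractf inner_diff_left inner_diff_right algebra_simps)
  finally show ?thesis
    unfolding diag' cross' cross diag by simp
qed

lemma convex_hull_finite_image:
  fixes f :: "'i \<Rightarrow> 'a::real_vector"
  assumes "finite I"
  shows "convex hull (f ` I) =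
    {\<Sum>i\<in>I. \<mu> i *\<^sub>R f i | \<mu>. (\<forall>i\<in>I. 0 \<le> \<mu> i) \<and> sum \<mu> I = 1}" (is "_ = ?C")
proof
  show "?C \<subseteq> convex hull (f ` I)"
  proof (rule subsetI, elim CollectE exE conjE)
    fix p \<mu> assume "p = (\<Sum>i\<in>I. \<mu> i *\<^sub>R f i)" "\<forall>i\<in>I. 0 \<le> \<mu> i" "sum \<mu> I = 1"
    then show "p \<in> convex hull (f ` I)"
      using convex_sum[OF assms convex_convex_hull, of \<mu> f "f ` I"] by (simp add: hull_inc)
  qed
  have convex: "convex ?C"
  proof (rule convexI, elim CollectE exE conjE)
    fix u v :: real and \<mu> \<nu> p q
    assume uv: "0 \<le> u" "0 \<le> v" "u + v = 1"
      and \<mu>: "p = (\<Sum>i\<in>I. \<mu> i *\<^sub>R f i)" "\<forall>i\<in>I. 0 \<le> \<mu> i" "sum \<mu> I = 1"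
      and \<nu>: "q = (\<Sum>i\<in>I. \<nu> i *\<^sub>R f i)" "\<forall>i\<in>I. 0 \<le> \<nu> i" "sum \<nu> I = 1"
    show "u *\<^sub>R p + v *\<^sub>R q \<in> ?C"
    proof (intro CollectI exI conjI)
      show "u *\<^sub>R p + v *\<^sub>R q = (\<Sum>i\<in>I. (u * \<mu> i + v * \<nu> i) *\<^sub>R f i)"
        using \<mu> \<nu> by (simp add: scaleR_sum_right scaleR_add_left sum.distrib)
      show "\<forall>i\<in>I. 0 \<le> u * \<mu> i + v * \<nu> i"
        using \<mu> \<nu> uv by simp
      show "(\<Sum>i\<in>I. u * \<mu> i + v * \<nu> i) = 1"
        using \<mu> \<nu> uv by (simp add: sum.distrib sum_distrib_left[symmetric])
    qed
  qed
  have image: "f ` I \<subseteq> ?C"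
  proof (intro subsetI, elim imageE)
    fix p i assume p: "p = f i" and i: "i \<in> I"
    have "(\<Sum>j\<in>I. (if j = i then 1 else 0) *\<^sub>R f j) = (\<Sum>j\<in>I. if j = i then f j else 0)"
      by (rule sum.cong) auto
    also have "\<dots> = p"
      using assms i p by simp
    finally show "p \<in> ?C"
      using assms i by (intro CollectI exI[of _ "\<lambda>j. if j = i then 1 else 0"]) auto
  qed
  show "convex hull (f ` I) \<subseteq> ?C"
    using image convex by (rule hull_minimal)
qed

lemma nonpos_if_quadratic_bound:
  fixes d N :: real
  assumes "0 \<le> N" and bound: "\<And>s. 0 < s \<Longrightarrow> s \<le> 1 \<Longrightarrow> s * d \<le> s\<^sup>2 * N"
  shows "d \<le> 0"
proof (rule ccontr)
  assume "\<not> d \<le> 0"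
  define s where "s = min 1 (d / (2 * (N + 1)))"
  have "0 < s" "s \<le> 1"
    using \<open>\<not> d \<le> 0\<close> \<open>0 \<le> N\<close> by (auto simp: s_def)
  then have "d \<le> s * N"
    using bound[of s] by (simp add: power2_eq_square mult.assoc)
  also have "\<dots> \<le> d / (2 * (N + 1)) * N"
    using \<open>0 \<le> N\<close> by (intro mult_right_mono) (auto simp: s_def)
  also have "\<dots> < d"
    using \<open>\<not> d \<le> 0\<close> \<open>0 \<le> N\<close> by (auto simp: field_simps intro!: add_nonneg_pos)
  finally show False by simp
qed

lemma finite_cball_Inter_nonempty:
  fixes c :: "'i \<Rightarrow> 'a::real_inner" and r :: "'i \<Rightarrow> real"
  assumes I: "finite I" and r: "\<And>i. i \<in> I \<Longrightarrow> 0 \<le> r i"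
    and comb: "\<And>\<mu>. \<forall>i\<in>I. 0 \<le> \<mu> i \<Longrightarrow> sum \<mu> I = 1 \<Longrightarrow>
      (\<Sum>i\<in>I. \<mu> i * ((norm (c i))\<^sup>2 - (r i)\<^sup>2)) \<le> (norm (\<Sum>i\<in>I. \<mu> i *\<^sub>R c i))\<^sup>2"
  shows "(\<Inter>i\<in>I. cball (c i) (r i)) \<noteq> {}"
proof (cases "I = {}")
  case False
  define q where "q i = (c i, (norm (c i))\<^sup>2 - (r i)\<^sup>2)" for i
  define F where "F p = snd p - (norm (fst p))\<^sup>2" for p :: "'a \<times> real"
  define K where "K = convex hull (q ` I)"
  have F_K: "F p \<le> 0" if "p \<in> K" for p
    using that comb unfolding K_def convex_hull_finite_image[OF I] F_def q_def
    by (auto simp: fst_sum snd_sum)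
  have "compact K" "K \<noteq> {}" "continuous_on K F"
    using I False unfolding K_def F_def
    by (auto simp: finite_imp_compact_convex_hull intro!: continuous_intros)
  then obtain w \<kappa> where p: "(w, \<kappa>) \<in> K" and max: "\<And>p'. p' \<in> K \<Longrightarrow> F p' \<le> F (w, \<kappa>)"
    using continuous_attains_sup by (metis surj_pair)
  have "w \<in> cball (c i) (r i)" if i: "i \<in> I" for i
  proof -
    \<comment> \<open>Along the segment from the maximiser towards \<open>q i\<close>, \<open>F\<close> is a concave quadratic in the
      parameter; its slope at the maximiser is nonpositive.\<close>
    define d where "d = (norm (w - c i))\<^sup>2 - (r i)\<^sup>2 - F (w, \<kappa>)"
    have "d \<le> 0"
    proof (rule nonpos_if_quadratic_bound)
      fix s :: real assume "0 < s" "s \<le> 1"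
      then have "(1 - s) *\<^sub>R (w, \<kappa>) + s *\<^sub>R q i \<in> K"
        using convexD[of K "(w, \<kappa>)" "q i" "1 - s" s] p i by (simp add: K_def hull_inc)
      moreover have "F ((1 - s) *\<^sub>R (w, \<kappa>) + s *\<^sub>R q i) = F (w, \<kappa>) + s * d - s\<^sup>2 * (norm (c i - w))\<^sup>2"
        unfolding F_def q_def d_def power2_norm_eq_inner
        by (simp add: inner_add_left inner_add_right inner_diff_left inner_diff_right inner_commute
            power2_eq_square algebra_simps)
      ultimately show "s * d \<le> s\<^sup>2 * (norm (c i - w))\<^sup>2"
        using max by fastforce
    qed simp
    then have "(dist (c i) w)\<^sup>2 \<le> (r i)\<^sup>2"
      using F_K[OF p] by (simp add: d_def dist_norm norm_minus_commute)
    then show ?thesis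
      using r[OF i] by (simp add: power2_le_iff_abs_le)
  qed
  then show ?thesis by blast
qed simp

lemma finite_monotone_diameter_cballs:
  fixes G :: "('a::real_inner \<times> 'a) set"
  assumes G: "finite G"
    and mono: "\<And>a b a' b'. (a, b) \<in> G \<Longrightarrow> (a', b') \<in> G \<Longrightarrow> 0 \<le> inner (a - a') (b - b')"
  shows "(\<Inter>(a, b)\<in>G. cball (midpoint a (x - b)) (dist a (x - b) / 2)) \<noteq> {}"
proof -
  have "(\<Inter>g\<in>G. cball (midpoint (fst g) (x - snd g)) (dist (fst g) (x - snd g) / 2)) \<noteq> {}"
  proof (rule finite_cball_Inter_nonempty[OF G])
    fix \<mu> :: "'a \<times> 'a \<Rightarrow> real"
    assume \<mu>: "\<forall>g\<in>G. 0 \<le> \<mu> g" "sum \<mu> G = 1"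
    define a where "a = (\<Sum>g\<in>G. \<mu> g *\<^sub>R fst g)"
    define b where "b = (\<Sum>g\<in>G. \<mu> g *\<^sub>R snd g)"
    have centre: "(\<Sum>g\<in>G. \<mu> g *\<^sub>R midpoint (fst g) (x - snd g)) = midpoint a (x - b)"
      using \<mu>(2) by (simp add: midpoint_def a_def b_def scaleR_add_right scaleR_diff_right
          sum.distrib sum_subtractf scaleR_sum_right[symmetric] scaleR_sum_left[symmetric])
        (simp add: scaleR_sum_right sum_divide_distrib[symmetric])
    have sq: "(norm (midpoint u v))\<^sup>2 - (dist u v / 2)\<^sup>2 = inner u v" for u v :: 'a
      unfolding midpoint_def dist_norm power_divide power2_norm_eq_inner
      by (simp add: inner_add_left inner_add_right inner_diff_left inner_diff_right inner_commute
          algebra_simps) (simp add: field_simps)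
    have "(\<Sum>g\<in>G. \<mu> g * ((norm (midpoint (fst g) (x - snd g)))\<^sup>2 - (dist (fst g) (x - snd g) / 2)\<^sup>2))
        = inner a x - (\<Sum>g\<in>G. \<mu> g * inner (fst g) (snd g))"
      using \<mu>(2) by (simp add: sq a_def inner_diff_right inner_sum_left right_diff_distrib
          sum_subtractf sum_distrib_left)
    also have "\<dots> \<le> inner a x - inner a b"
      using inner_convex_combination_le[OF G, of fst snd \<mu>] mono \<mu> unfolding a_def b_def
      by fastforce
    also have "\<dots> \<le> (norm (midpoint a (x - b)))\<^sup>2"
      unfolding inner_diff_right[symmetric] sq[of a "x - b", symmetric] by simp
    finally show "(\<Sum>g\<in>G. \<mu> g * ((norm (midpoint (fst g) (x - snd g)))\<^sup>2 - (dist (fst g) (x - snd g) / 2)\<^sup>2))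
        \<le> (norm (\<Sum>g\<in>G. \<mu> g *\<^sub>R midpoint (fst g) (x - snd g)))\<^sup>2"
      unfolding centre .
  qed simp
  then show ?thesis
    by (simp add: case_prod_beta')
qed

lemma infdist_lessE:
  assumes "A \<noteq> {}" "infdist x A < t"
  obtains a where "a \<in> A" "dist x a < t"
  using assms by (auto simp: infdist_notempty cINF_less_iff)

lemma le_infdistI:
  assumes "A \<noteq> {}" "\<And>a. a \<in> A \<Longrightarrow> d \<le> dist x a"
  shows "d \<le> infdist x A"
  unfolding infdist_notempty[OF assms(1)] using assms by (rule cINF_greatest)

lemma convex_near_minimisers_close:
  fixes C :: "'a::real_inner set"
  assumes "convex C" "y \<in> C" "z \<in> C" "norm y \<le> a" "norm z \<le> a" "0 \<le> b" "b \<le> infdist 0 C"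
  shows "(norm (y - z))\<^sup>2 \<le> 4 * (a\<^sup>2 - b\<^sup>2)"
proof -
  have "midpoint y z \<in> C"
    using convexD[OF assms(1-3), of "1/2" "1/2"] by (simp add: midpoint_def scaleR_add_right)
  then have "b \<le> norm (midpoint y z)"
    using assms(7) infdist_le[of "midpoint y z" C 0] by simp
  then have "b\<^sup>2 \<le> (norm (midpoint y z))\<^sup>2"
    using assms(6) by (rule power_mono)
  moreover have "(norm y)\<^sup>2 \<le> a\<^sup>2" "(norm z)\<^sup>2 \<le> a\<^sup>2"
    using assms(4,5) by (auto intro: power_mono)
  moreover have "(norm (y - z))\<^sup>2 = 2 * (norm y)\<^sup>2 + 2 * (norm z)\<^sup>2 - 4 * (norm (midpoint y z))\<^sup>2"
    unfolding midpoint_def power2_norm_eq_inner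
    by (simp add: inner_add_left inner_add_right inner_diff_left inner_diff_right inner_commute
        algebra_simps)
  ultimately show ?thesis
    unfolding right_diff_distrib by linarith
qed

lemma decseq_convex_minimising_sequences:
  fixes C :: "nat \<Rightarrow> 'a::{real_inner,complete_space} set"
  assumes convex: "\<And>n. convex (C n)" and dec: "\<And>n m. n \<le> m \<Longrightarrow> C m \<subseteq> C n"
    and e: "e \<longlonglongrightarrow> 0" "decseq e" and "0 \<le> s" and low: "\<And>n. s - e n \<le> infdist 0 (C n)"
    and y: "\<And>n. y n \<in> C n" "\<And>n. norm (y n) \<le> s + e n"
  obtains p where "y \<longlonglongrightarrow> p"
    and "\<And>z. (\<And>n. z n \<in> C n) \<Longrightarrow> (\<And>n. norm (z n) \<le> s + e n) \<Longrightarrow> z \<longlonglongrightarrow> p"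
proof -
  define \<beta> where "\<beta> n = sqrt (4 * ((s + e n)\<^sup>2 - (max 0 (s - e n))\<^sup>2))" for n
  have \<beta>: "\<beta> \<longlonglongrightarrow> sqrt (4 * ((s + 0)\<^sup>2 - (max 0 (s - 0))\<^sup>2))"
    unfolding \<beta>_def by (intro tendsto_intros e)
  then have \<beta>0: "\<beta> \<longlonglongrightarrow> 0"
    using \<open>0 \<le> s\<close> by simp
  have close: "norm (w - w') \<le> \<beta> n"
    if "w \<in> C n" "w' \<in> C n" "norm w \<le> s + e n" "norm w' \<le> s + e n" for n w w'
    unfolding \<beta>_def using low[of n] infdist_nonneg[of 0 "C n"]
    by (intro real_le_rsqrt convex_near_minimisers_close[OF convex that]) auto
  have "Cauchy y"
    unfolding Cauchy_altdef2
  proof (intro allI impI)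
    fix \<epsilon> :: real assume "0 < \<epsilon>"
    then obtain N where N: "\<beta> N < \<epsilon>"
      using order_tendstoD(2)[OF \<beta>0] eventually_sequentially by (metis order_refl)
    have "dist (y n) (y N) \<le> \<beta> N" if "N \<le> n" for n
    proof -
      have "y n \<in> C N" "norm (y n) \<le> s + e N"
        using dec[OF that] y[of n] e(2)[THEN decseqD, OF that] by auto
      then show ?thesis
        using close[of "y n" N "y N"] y[of N] by (simp add: dist_norm)
    qed
    then show "\<exists>N. \<forall>n\<ge>N. dist (y n) (y N) < \<epsilon>"
      using N by force
  qed
  then obtain p where p: "y \<longlonglongrightarrow> p"
    using Cauchy_convergent_iff convergent_def by blast
  moreover have "z \<longlonglongrightarrow> p" if "\<And>n. z n \<in> C n" "\<And>n. norm (z n) \<le> s + e n" for z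
  proof -
    have zy: "(\<lambda>n. z n - y n) \<longlonglongrightarrow> 0"
      using close[OF that(1) y(1) that(2) y(2)] by (intro Lim_null_comparison[OF _ \<beta>0]) auto
    show ?thesis
      using tendsto_add[OF zy p] by simp
  qed
  ultimately show ?thesis
    using that by blast
qed

lemma finite_Inter_infdist_bounded:
  fixes \<F> :: "'a::real_normed_vector set set"
  assumes K: "K \<in> \<F>" "bounded K"
    and fip: "\<And>\<G>. finite \<G> \<Longrightarrow> \<G> \<subseteq> \<F> \<Longrightarrow> \<Inter>\<G> \<noteq> {}"
  obtains B where "\<And>\<I>. finite \<I> \<Longrightarrow> \<I> \<subseteq> \<F> \<Longrightarrow> infdist 0 (\<Inter>\<I>) \<le> B"
proof -
  obtain B where B: "\<And>y. y \<in> K \<Longrightarrow> norm y \<le> B"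
    using K(2) by (auto simp: bounded_iff)
  have "infdist 0 (\<Inter>\<I>) \<le> B" if \<I>: "finite \<I>" "\<I> \<subseteq> \<F>" for \<I>
  proof -
    obtain y where y: "y \<in> \<Inter>(insert K \<I>)"
      using fip[of "insert K \<I>"] \<I> K(1) by auto
    then have "infdist 0 (\<Inter>\<I>) \<le> infdist 0 (\<Inter>(insert K \<I>))"
      by (intro infdist_mono) auto
    also have "\<dots> \<le> norm y"
      using infdist_le[OF y, of 0] by simp
    finally show ?thesis
      using B y by force
  qed
  then show ?thesis
    by (rule that)
qed

lemma finite_Inter_infdist_SUP_approx:
  fixes \<F> :: "'a::real_normed_vector set set"
  assumes K: "K \<in> \<F>" "bounded K"
    and fip: "\<And>\<G>. finite \<G> \<Longrightarrow> \<G> \<subseteq> \<F> \<Longrightarrow> \<Inter>\<G> \<noteq> {}"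
  obtains s \<G> where "0 \<le> s" "\<And>\<I>. finite \<I> \<Longrightarrow> \<I> \<subseteq> \<F> \<Longrightarrow> infdist 0 (\<Inter>\<I>) \<le> s"
    and "\<And>n. finite (\<G> n)" "\<And>n. \<G> n \<subseteq> \<F>" "\<And>n m. n \<le> m \<Longrightarrow> \<G> n \<subseteq> \<G> m"
    and "\<And>n. s - inverse (real (Suc n)) \<le> infdist 0 (\<Inter>(\<G> n))"
proof -
  define FF where "FF = {\<G>. finite \<G> \<and> \<G> \<subseteq> \<F>}"
  define v where "v \<G> = infdist 0 (\<Inter>\<G>)" for \<G> :: "'a set set"
  have v_mono: "v \<G> \<le> v \<H>" if "\<H> \<in> FF" "\<G> \<subseteq> \<H>" for \<G> \<H>
    using that fip by (auto simp: v_def FF_def intro!: infdist_mono)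
  obtain B where B: "\<And>\<I>. finite \<I> \<Longrightarrow> \<I> \<subseteq> \<F> \<Longrightarrow> infdist 0 (\<Inter>\<I>) \<le> B"
    using finite_Inter_infdist_bounded[OF K fip] by blast
  then have "v \<G> \<le> B" if "\<G> \<in> FF" for \<G>
    using that by (simp add: FF_def v_def)
  then have bdd: "bdd_above (v ` FF)"
    by (intro bdd_aboveI[of _ B]) blast
  define s where "s = (SUP \<G>\<in>FF. v \<G>)"
  have v_le_s: "v \<G> \<le> s" if "\<G> \<in> FF" for \<G>
    unfolding s_def using bdd that by (rule cSUP_upper2) simp
  have "{} \<in> FF"
    by (simp add: FF_def)
  have "\<exists>\<H>\<in>FF. s - inverse (real (Suc n)) < v \<H>" for n
  proof -
    have "s - inverse (real (Suc n)) < (SUP \<G>\<in>FF. v \<G>)"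
      by (simp add: s_def)
    then show ?thesis
      using \<open>{} \<in> FF\<close> bdd by (subst (asm) less_cSUP_iff) auto
  qed
  then obtain \<H> where \<H>: "\<And>n. \<H> n \<in> FF" "\<And>n. s - inverse (real (Suc n)) < v (\<H> n)"
    by metis
  define \<G> where "\<G> n = (\<Union>k\<le>n. \<H> k)" for n
  have \<G>_FF: "\<G> n \<in> FF" for n
    using \<H>(1) by (auto simp: FF_def \<G>_def)
  show ?thesis
  proof (rule that[of s \<G>])
    show "0 \<le> s"
      using order_trans[OF infdist_nonneg v_le_s[OF \<open>{} \<in> FF\<close>, unfolded v_def]] .
    show "infdist 0 (\<Inter>\<I>) \<le> s" if "finite \<I>" "\<I> \<subseteq> \<F>" for \<I>
      using v_le_s[of \<I>] that by (simp add: FF_def v_def)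
    show "finite (\<G> n)" "\<G> n \<subseteq> \<F>" for n
      using \<G>_FF[of n] by (simp_all add: FF_def)
    show "\<G> n \<subseteq> \<G> m" if "n \<le> m" for n m
      using that by (force simp: \<G>_def)
    have \<H>_le: "v (\<H> n) \<le> v (\<G> n)" for n
      using v_mono[OF \<G>_FF] by (auto simp: \<G>_def)
    show "s - inverse (real (Suc n)) \<le> infdist 0 (\<Inter>(\<G> n))" for n
      using \<H>(2)[of n] \<H>_le[of n] unfolding v_def by linarith
  qed
qed

lemma bounded_closed_convex_fip:
  fixes \<F> :: "'a::{real_inner,complete_space} set set"
  assumes closed: "\<And>S. S \<in> \<F> \<Longrightarrow> closed S" and convex: "\<And>S. S \<in> \<F> \<Longrightarrow> convex S"
    and K: "K \<in> \<F>" "bounded K"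
    and fip: "\<And>\<G>. finite \<G> \<Longrightarrow> \<G> \<subseteq> \<F> \<Longrightarrow> \<Inter>\<G> \<noteq> {}"
  shows "\<Inter>\<F> \<noteq> {}"
proof -
  \<comment> \<open>By the parallelogram law, near-minimal points of finite intersections whose distance
    from \<open>0\<close> approaches the supremum \<open>s\<close> form a Cauchy sequence; its limit lies in every
    member of \<open>\<F>\<close>.\<close>
  obtain s \<G> where "0 \<le> s" and upper: "\<And>\<I>. finite \<I> \<Longrightarrow> \<I> \<subseteq> \<F> \<Longrightarrow> infdist 0 (\<Inter>\<I>) \<le> s"
    and \<G>: "\<And>n. finite (\<G> n)" "\<And>n. \<G> n \<subseteq> \<F>" "\<And>n m. n \<le> m \<Longrightarrow> \<G> n \<subseteq> \<G> m"
    and lower: "\<And>n. s - inverse (real (Suc n)) \<le> infdist 0 (\<Inter>(\<G> n))"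
    using finite_Inter_infdist_SUP_approx[OF K fip] by blast
  define e where "e n = inverse (real (Suc n))" for n
  have e_pos: "0 < e n" for n
    by (simp add: e_def)
  have e: "e \<longlonglongrightarrow> 0" "decseq e"
    unfolding e_def by (rule LIMSEQ_inverse_real_of_nat, intro decseq_SucI) simp
  have near_min: "\<exists>y\<in>\<Inter>\<I>. norm y \<le> s + e n" if "finite \<I>" "\<I> \<subseteq> \<F>" for \<I> n
  proof -
    have "infdist 0 (\<Inter>\<I>) < s + e n"
      using upper[OF that] e_pos[of n] by linarith
    then show ?thesis
      using fip[OF that] by (metis infdist_lessE dist_0_norm less_imp_le)
  qed
  have "\<exists>y. y \<in> \<Inter>(\<G> n) \<and> norm y \<le> s + e n" for n
    using near_min[OF \<G>(1,2)] by blast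
  then obtain y where y: "\<And>n. y n \<in> \<Inter>(\<G> n)" "\<And>n. norm (y n) \<le> s + e n"
    by metis
  have \<G>_convex: "convex (\<Inter>(\<G> n))" for n
    using convex \<G>(2)[of n] by (auto intro!: convex_Inter)
  have \<G>_dec: "\<Inter>(\<G> m) \<subseteq> \<Inter>(\<G> n)" if "n \<le> m" for n m
    using \<G>(3)[OF that] by blast
  have lower_e: "s - e n \<le> infdist 0 (\<Inter>(\<G> n))" for n
    using lower[of n] by (simp add: e_def)
  obtain p where p: "\<And>z. (\<And>n. z n \<in> \<Inter>(\<G> n)) \<Longrightarrow> (\<And>n. norm (z n) \<le> s + e n) \<Longrightarrow> z \<longlonglongrightarrow> p"
    using decseq_convex_minimising_sequences[of "\<lambda>n. \<Inter>(\<G> n)",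
        OF \<G>_convex \<G>_dec e \<open>0 \<le> s\<close> lower_e y] by blast
  have "p \<in> S" if "S \<in> \<F>" for S
  proof -
    have "\<exists>z. z \<in> \<Inter>(insert S (\<G> n)) \<and> norm z \<le> s + e n" for n
      using near_min[of "insert S (\<G> n)" n] \<G>(1,2)[of n] that by auto
    then obtain z where z: "\<And>n. z n \<in> \<Inter>(insert S (\<G> n))" "\<And>n. norm (z n) \<le> s + e n"
      by metis
    have "z n \<in> \<Inter>(\<G> n)" for n
      using z(1)[of n] by simp
    then have "z \<longlonglongrightarrow> p"
      using z(2) by (rule p)
    then show "p \<in> S"
      using closed_sequentially[OF closed[OF that]] z(1) by blast
  qed
  then show ?thesis by blast
qed

lemma monotone_extension_point:
  fixes G :: "('a::{real_inner,complete_space} \<times> 'a) set"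
  assumes mono: "\<And>a b a' b'. (a, b) \<in> G \<Longrightarrow> (a', b') \<in> G \<Longrightarrow> 0 \<le> inner (a - a') (b - b')"
  shows "\<exists>y. \<forall>(a, b)\<in>G. 0 \<le> inner (y - a) (x - y - b)"
proof (cases "G = {}")
  case False
  define D where "D = (\<lambda>(a, b). cball (midpoint a (x - b)) (dist a (x - b) / 2))"
  obtain g where "g \<in> G"
    using False by blast
  have "\<Inter>(D ` G) \<noteq> {}"
  proof (rule bounded_closed_convex_fip[where K = "D g"])
    show "closed S" "convex S" if "S \<in> D ` G" for S
      using that by (auto simp: D_def)
    show "D g \<in> D ` G" "bounded (D g)"
      using \<open>g \<in> G\<close> by (auto simp: D_def split: prod.splits)
    fix \<G> assume "finite \<G>" "\<G> \<subseteq> D ` G"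
    then obtain G' where G': "G' \<subseteq> G" "finite G'" "\<G> = D ` G'"
      by (metis finite_subset_image)
    have "(\<Inter>(a, b)\<in>G'. cball (midpoint a (x - b)) (dist a (x - b) / 2)) \<noteq> {}"
      using G'(2) by (rule finite_monotone_diameter_cballs) (use G'(1) in \<open>blast intro: mono\<close>)
    then show "\<Inter>\<G> \<noteq> {}"
      by (simp add: G'(3) D_def)
  qed
  then obtain y where y: "\<And>g. g \<in> G \<Longrightarrow> y \<in> D g"
    by blast
  have "0 \<le> inner (y - a) (x - y - b)" if "(a, b) \<in> G" for a b
    using y[OF that, unfolded D_def case_prod_conv mem_cball_diameter_iff]
    by (simp add: diff_diff_eq add.commute)
  then show ?thesis
    by blast
qed simp

lemma maximal_monotone_memI:
  assumes mm: "maximal_monotone A"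
    and related: "\<And>a b. b \<in> A a \<Longrightarrow> 0 \<le> inner (y - a) (u - b)"
  shows "u \<in> A y"
proof -
  define B where "B = A(y := insert u (A y))"
  have mono: "monotone_op A"
    using mm by (simp add: maximal_monotone_def)
  have "monotone_op B"
    unfolding monotone_op_def
  proof (intro allI impI)
    fix p q v w assume "v \<in> B p" "w \<in> B q"
    then have "v \<in> A p \<or> p = y \<and> v = u" "w \<in> A q \<or> q = y \<and> w = u"
      unfolding B_def by (auto split: if_splits)
    then consider "p = y" "v = u" "q = y" "w = u" | "p = y" "v = u" "w \<in> A q"
      | "v \<in> A p" "q = y" "w = u" | "v \<in> A p" "w \<in> A q"
      by blast
    then show "0 \<le> inner (p - q) (v - w)"
    proof cases
      case 2
      then show ?thesis
        using related[of w q] by simp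
    next
      case 3
      then show ?thesis
        using related[of v p] by (simp add: inner_diff_left inner_diff_right algebra_simps)
    next
      case 4
      then show ?thesis
        using mono unfolding monotone_op_def by blast
    qed simp
  qed
  moreover have "\<forall>z. A z \<subseteq> B z"
    by (simp add: B_def subset_insertI)
  ultimately have "B = A"
    using mm unfolding maximal_monotone_def by blast
  moreover have "u \<in> B y"
    by (simp add: B_def)
  ultimately show ?thesis
    by simp
qed

theorem maximal_monotone_range:
  fixes A :: "'a::{real_inner,complete_space} \<Rightarrow> 'a set"
  assumes mm: "maximal_monotone A" and "0 < lam"
  shows "\<exists>y. \<exists>u\<in>A y. x = y + lam *\<^sub>R u"
proof -
  have mono: "monotone_op A"
    using mm by (simp add: maximal_monotone_def)
  define G where "G = {(a, lam *\<^sub>R b) | a b. b \<in> A a}"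
  have "0 \<le> inner (a - a') (b - b')" if ab: "(a, b) \<in> G" "(a', b') \<in> G" for a b a' b'
  proof -
    obtain c c' where "b = lam *\<^sub>R c" "c \<in> A a" "b' = lam *\<^sub>R c'" "c' \<in> A a'"
      using ab by (auto simp: G_def)
    then show ?thesis
      using mono \<open>0 < lam\<close> unfolding monotone_op_def by (simp flip: scaleR_diff_right)
  qed
  then obtain y where "\<forall>(a, b)\<in>G. 0 \<le> inner (y - a) (x - y - b)"
    using monotone_extension_point[of G x] by blast
  then have y: "0 \<le> inner (y - a) (x - y - lam *\<^sub>R b)" if "b \<in> A a" for a b
    using that by (auto simp: G_def)
  define u where "u = (1 / lam) *\<^sub>R (x - y)"
  have "u \<in> A y"
  proof (rule maximal_monotone_memI[OF mm])
    fix a b assume "b \<in> A a"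
    have "u - b = (1 / lam) *\<^sub>R (x - y - lam *\<^sub>R b)"
      using \<open>0 < lam\<close> by (simp add: u_def scaleR_diff_right)
    then have "inner (y - a) (u - b) = inner (y - a) (x - y - lam *\<^sub>R b) / lam"
      by simp
    then show "0 \<le> inner (y - a) (u - b)"
      using y[OF \<open>b \<in> A a\<close>] \<open>0 < lam\<close> by simp
  qed
  moreover have "x = y + lam *\<^sub>R u"
    using \<open>0 < lam\<close> by (simp add: u_def)
  ultimately show ?thesis by blast
qed

section \<open>The resolvent\<close>

lemma resolventE:
  fixes A :: "'a::{real_inner,complete_space} \<Rightarrow> 'a set"
  assumes mm: "maximal_monotone A" and "0 < lam"
  obtains u where "u \<in> A (resolvent A lam x)" "x = resolvent A lam x + lam *\<^sub>R u"
proof -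
  have unique: "y1 = y2" if "u1 \<in> A y1" "x = y1 + lam *\<^sub>R u1" "u2 \<in> A y2" "x = y2 + lam *\<^sub>R u2"
    for y1 y2 u1 u2
  proof -
    have "0 \<le> inner (y1 - y2) (u1 - u2)"
      using mm that unfolding maximal_monotone_def monotone_op_def by blast
    moreover have "y1 - y2 = - lam *\<^sub>R (u1 - u2)"
      using that by (simp add: algebra_simps)
    ultimately have "inner (u1 - u2) (u1 - u2) \<le> 0"
      using \<open>0 < lam\<close> by (simp add: mult_le_0_iff)
    then have "u1 = u2"
      by (metis antisym inner_ge_zero inner_eq_zero_iff right_minus_eq)
    then show ?thesis
      using that by simp
  qed
  have "\<exists>!y. \<exists>u\<in>A y. x = y + lam *\<^sub>R u"
    using maximal_monotone_range[OF mm \<open>0 < lam\<close>] unique by blast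
  then have "\<exists>u\<in>A (resolvent A lam x). x = resolvent A lam x + lam *\<^sub>R u"
    unfolding resolvent_def by (rule theI')
  then show ?thesis
    using that by blast
qed

lemma inner_resolvent_residual_le:
  fixes A :: "'a::{real_inner,complete_space} \<Rightarrow> 'a set"
  assumes mm: "maximal_monotone A" and "0 < lam" and z: "z \<in> zeros A"
  shows "inner (x - z) (resolvent A lam x - x) \<le> - (norm (resolvent A lam x - x))\<^sup>2"
proof -
  let ?J = "resolvent A lam x"
  obtain u where u: "u \<in> A ?J" "x = ?J + lam *\<^sub>R u"
    using resolventE[OF mm \<open>0 < lam\<close>] by blast
  have "monotone_op A"
    using mm by (simp add: maximal_monotone_def)
  then have "0 \<le> inner (?J - z) (u - 0)"
    using u(1) z unfolding monotone_op_def zeros_def by blast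
  moreover have "x - ?J = lam *\<^sub>R u"
    using u(2) by (metis add_diff_cancel_left')
  ultimately have "0 \<le> inner (?J - z) (x - ?J)"
    using \<open>0 < lam\<close> by (simp add: zero_le_mult_iff)
  moreover have "inner (x - z) (?J - x) = - (norm (?J - x))\<^sup>2 - inner (?J - z) (x - ?J)"
    unfolding power2_norm_eq_inner
    by (simp add: inner_diff_left inner_diff_right inner_commute algebra_simps)
  ultimately show ?thesis by simp
qed

lemma infdist_zeros_le_resolvent_residual:
  fixes A :: "'a::{real_inner,complete_space} \<Rightarrow> 'a set"
  assumes mm: "maximal_monotone A" and "0 < lam" and "0 \<le> \<kappa>"
    and EB: "\<And>y. A y \<noteq> {} \<Longrightarrow> infdist 0 (A y) \<le> \<delta> \<Longrightarrow>
        infdist y (zeros A) \<le> \<kappa> * infdist 0 (A y)"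
    and small: "norm (resolvent A lam x - x) \<le> \<delta> * lam"
  shows "infdist x (zeros A) \<le> (1 + \<kappa> / lam) * norm (resolvent A lam x - x)"
proof -
  let ?J = "resolvent A lam x"
  obtain u where u: "u \<in> A ?J" "x = ?J + lam *\<^sub>R u"
    using resolventE[OF mm \<open>0 < lam\<close>] by blast
  have "x - ?J = lam *\<^sub>R u"
    using u(2) by (metis add_diff_cancel_left')
  then have norm_u: "norm u = norm (?J - x) / lam"
    using \<open>0 < lam\<close> by (simp add: norm_minus_commute)
  have u_dist: "infdist 0 (A ?J) \<le> norm u"
    using infdist_le[OF u(1), of 0] by simp
  moreover have "norm u \<le> \<delta>"
    using small \<open>0 < lam\<close> by (simp add: norm_u pos_divide_le_eq mult.commute)
  ultimately have "infdist ?J (zeros A) \<le> \<kappa> * infdist 0 (A ?J)"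
    using EB[of ?J] u(1) by fastforce
  also have "\<dots> \<le> \<kappa> / lam * norm (?J - x)"
    using mult_left_mono[OF u_dist \<open>0 \<le> \<kappa>\<close>] by (simp add: norm_u)
  finally have "infdist ?J (zeros A) \<le> \<kappa> / lam * norm (?J - x)" .
  then show ?thesis
    using infdist_triangle[of x "zeros A" ?J] by (simp add: dist_norm norm_minus_commute algebra_simps)
qed

lemma infdist_zeros_sq_le_resolvent_residual:
  fixes A :: "'a::{real_inner,complete_space} \<Rightarrow> 'a set"
  assumes mm: "maximal_monotone A" and lam: "0 < lm" "lm \<le> lam" and "0 \<le> \<kappa>" "0 < \<delta>"
    and EB: "\<And>y. A y \<noteq> {} \<Longrightarrow> infdist 0 (A y) \<le> \<delta> \<Longrightarrow>
        infdist y (zeros A) \<le> \<kappa> * infdist 0 (A y)"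
    and bounded: "infdist x (zeros A) \<le> R"
  shows "min (inverse ((1 + \<kappa> / lm)\<^sup>2)) ((\<delta> * lm / (R + 1))\<^sup>2) * (infdist x (zeros A))\<^sup>2
      \<le> (norm (resolvent A lam x - x))\<^sup>2"
proof (cases "norm (resolvent A lam x - x) \<le> \<delta> * lam")
  case True
  define a where "a = 1 + \<kappa> / lm"
  have "0 < a"
    using lam \<open>0 \<le> \<kappa>\<close> by (simp add: a_def add_pos_nonneg)
  have "infdist x (zeros A) \<le> (1 + \<kappa> / lam) * norm (resolvent A lam x - x)"
    using infdist_zeros_le_resolvent_residual[OF mm _ \<open>0 \<le> \<kappa>\<close> EB True] lam by simp
  also have "\<dots> \<le> a * norm (resolvent A lam x - x)"
    unfolding a_def using lam \<open>0 \<le> \<kappa>\<close>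
    by (intro mult_right_mono add_left_mono divide_left_mono) auto
  finally have "(infdist x (zeros A))\<^sup>2 \<le> a\<^sup>2 * (norm (resolvent A lam x - x))\<^sup>2"
    by (simp add: power_mono infdist_nonneg flip: power_mult_distrib)
  then have "inverse (a\<^sup>2) * (infdist x (zeros A))\<^sup>2 \<le> (norm (resolvent A lam x - x))\<^sup>2"
    using \<open>0 < a\<close> by (simp add: inverse_eq_divide pos_divide_le_eq mult.commute)
  then show ?thesis
    unfolding a_def
    by (rule order_trans[rotated]) (simp add: mult_right_mono)
next
  case False
  have "0 \<le> R"
    using bounded infdist_nonneg order_trans by blast
  have "(\<delta> * lm / (R + 1))\<^sup>2 * (infdist x (zeros A))\<^sup>2 \<le> (\<delta> * lm / (R + 1))\<^sup>2 * (R + 1)\<^sup>2"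
    using bounded infdist_nonneg[of x "zeros A"] by (intro mult_left_mono power_mono) auto
  also have "\<dots> = (\<delta> * lm)\<^sup>2"
    using \<open>0 \<le> R\<close> by (simp add: power_divide)
  also have "\<dots> \<le> (norm (resolvent A lam x - x))\<^sup>2"
    using False lam \<open>0 < \<delta>\<close> by (intro power_mono) (auto intro: order_trans[OF mult_left_mono])
  finally show ?thesis
    by (rule order_trans[rotated]) (simp add: mult_right_mono)
qed

section \<open>Flows that decrease the distance to a set\<close>

lemma norm_sq_decrease_of_inner_le:
  fixes x v :: "real \<Rightarrow> 'a::real_inner"
  assumes "t \<le> s"
    and deriv: "\<And>\<tau>. \<tau> \<in> {t..s} \<Longrightarrow> (x has_vector_derivative v \<tau>) (at \<tau> within {t..s})"
    and slope: "\<And>\<tau>. \<tau> \<in> {t..s} \<Longrightarrow> inner (x \<tau> - z) (v \<tau>) \<le> - C"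
  shows "(norm (x s - z))\<^sup>2 + 2 * C * (s - t) \<le> (norm (x t - z))\<^sup>2"
proof -
  define f where "f \<tau> = (norm (x \<tau> - z))\<^sup>2 + 2 * C * \<tau>" for \<tau>
  have "(f has_derivative (\<lambda>h. h * (2 * inner (x \<tau> - z) (v \<tau>) + 2 * C))) (at \<tau> within {t..s})"
    if "t \<le> \<tau>" "\<tau> \<le> s" for \<tau>
    using deriv[of \<tau>] that unfolding f_def has_vector_derivative_def power2_norm_eq_inner
    by (auto intro!: derivative_eq_intros simp: inner_commute algebra_simps)
  then have "\<exists>\<xi>\<in>{t..s}. f s - f t = (s - t) * (2 * inner (x \<xi> - z) (v \<xi>) + 2 * C)"
    using mvt_very_simple[OF \<open>t \<le> s\<close>, of f "\<lambda>\<tau> h. h * (2 * inner (x \<tau> - z) (v \<tau>) + 2 * C)"]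
    by simp
  then obtain \<xi> where \<xi>: "\<xi> \<in> {t..s}" "f s - f t = (s - t) * (2 * inner (x \<xi> - z) (v \<xi>) + 2 * C)"
    by blast
  have "(s - t) * (2 * inner (x \<xi> - z) (v \<xi>) + 2 * C) \<le> 0"
    using slope[OF \<xi>(1)] \<open>t \<le> s\<close> by (intro mult_nonneg_nonpos) auto
  then show ?thesis
    using \<xi>(2) by (simp add: f_def algebra_simps)
qed

lemma antimono_geometric_decay:
  fixes \<phi> :: "real \<Rightarrow> real"
  assumes anti: "\<And>s t. 0 \<le> s \<Longrightarrow> s \<le> t \<Longrightarrow> \<phi> t \<le> \<phi> s"
    and step: "\<And>t. 0 \<le> t \<Longrightarrow> q * \<phi> (t + 1) \<le> \<phi> t"
    and "1 \<le> q" "0 \<le> \<phi> 0" "0 \<le> t"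
  shows "\<phi> t \<le> q * \<phi> 0 * exp (- ln q * t)"
proof -
  have iter: "q ^ n * \<phi> (real n) \<le> \<phi> 0" for n
  proof (induction n)
    case (Suc n)
    have "q ^ Suc n * \<phi> (real (Suc n)) = q ^ n * (q * \<phi> (real n + 1))"
      by (simp add: algebra_simps)
    also have "\<dots> \<le> q ^ n * \<phi> (real n)"
      using step[of "real n"] \<open>1 \<le> q\<close> by (intro mult_left_mono) auto
    finally show ?case
      using Suc.IH by simp
  qed simp
  define n where "n = nat \<lfloor>t\<rfloor>"
  have n: "real n \<le> t" "t \<le> real n + 1"
    using \<open>0 \<le> t\<close> by (auto simp: n_def)
  have q_pow: "q ^ n = exp (ln q * real n)"
    using \<open>1 \<le> q\<close> by (simp add: mult.commute[of "ln q"] exp_of_nat_mult)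
  have "\<phi> t \<le> \<phi> (real n)"
    using anti n(1) by simp
  also have "\<dots> \<le> \<phi> 0 * exp (- (ln q * real n))"
    using iter[of n] \<open>1 \<le> q\<close> by (simp add: q_pow exp_minus field_simps)
  also have "\<dots> \<le> \<phi> 0 * exp (ln q - ln q * t)"
  proof -
    have "ln q * t \<le> ln q * (real n + 1)"
      using n(2) \<open>1 \<le> q\<close> by (intro mult_left_mono) auto
    then show ?thesis
      using \<open>0 \<le> \<phi> 0\<close> by (intro mult_left_mono) (auto simp: algebra_simps)
  qed
  also have "\<dots> = q * \<phi> 0 * exp (- ln q * t)"
    using \<open>1 \<le> q\<close> by (simp add: exp_diff exp_minus field_simps)
  finally show ?thesis .
qed

locale fejer_flow =
  fixes x v :: "real \<Rightarrow> 'a::real_inner" and Z :: "'a set"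
  assumes Z_ne: "Z \<noteq> {}"
    and deriv: "\<And>t. 0 \<le> t \<Longrightarrow> (x has_vector_derivative v t) (at t within {0..})"
    and fejer: "\<And>t z. 0 \<le> t \<Longrightarrow> z \<in> Z \<Longrightarrow> inner (x t - z) (v t) \<le> - (norm (v t))\<^sup>2"
begin

lemma dist_sq_decrease:
  assumes "z \<in> Z" "0 \<le> t" "t \<le> s" and C: "\<And>\<tau>. t \<le> \<tau> \<Longrightarrow> \<tau> \<le> s \<Longrightarrow> C \<le> (norm (v \<tau>))\<^sup>2"
  shows "(dist (x s) z)\<^sup>2 + 2 * C * (s - t) \<le> (dist (x t) z)\<^sup>2"
  unfolding dist_norm
proof (rule norm_sq_decrease_of_inner_le[OF \<open>t \<le> s\<close>])
  fix \<tau> assume "\<tau> \<in> {t..s}"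
  then show "(x has_vector_derivative v \<tau>) (at \<tau> within {t..s})"
    using deriv[of \<tau>] \<open>0 \<le> t\<close> by (auto intro: has_vector_derivative_within_subset)
  show "inner (x \<tau> - z) (v \<tau>) \<le> - C"
    using fejer[of \<tau> z] C[of \<tau>] \<open>\<tau> \<in> {t..s}\<close> assms(1,2) by auto
qed

lemma dist_antimono:
  assumes "z \<in> Z" "0 \<le> t" "t \<le> s"
  shows "dist (x s) z \<le> dist (x t) z"
  using dist_sq_decrease[OF assms, of 0] by (simp add: power2_le_iff_abs_le)

lemma norm_velocity_le:
  assumes "0 \<le> t" "z \<in> Z"
  shows "norm (v t) \<le> dist (x t) z"
proof -
  have "(norm (v t))\<^sup>2 \<le> inner (x t - z) (- v t)"
    using fejer[OF assms] by simp
  also have "\<dots> \<le> dist (x t) z * norm (v t)"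
    using norm_cauchy_schwarz[of "x t - z" "- v t"] by (simp add: dist_norm)
  finally show ?thesis
    by (cases "v t = 0") (auto simp: power2_eq_square)
qed

lemma infdist_antimono:
  assumes "0 \<le> t" "t \<le> s"
  shows "infdist (x s) Z \<le> infdist (x t) Z"
  using infdist_le dist_antimono assms by (blast intro: le_infdistI[OF Z_ne] order_trans)

lemma infdist_contract:
  assumes "0 \<le> c" and residual: "\<And>\<tau>. 0 \<le> \<tau> \<Longrightarrow> c * (infdist (x \<tau>) Z)\<^sup>2 \<le> (norm (v \<tau>))\<^sup>2"
    and "0 \<le> t"
  shows "sqrt (1 + 2 * c) * infdist (x (t + 1)) Z \<le> infdist (x t) Z"
proof (rule le_infdistI[OF Z_ne])
  fix z assume "z \<in> Z"
  let ?d = "infdist (x (t + 1)) Z"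
  have "c * ?d\<^sup>2 \<le> (norm (v \<tau>))\<^sup>2" if "t \<le> \<tau>" "\<tau> \<le> t + 1" for \<tau>
  proof -
    have "?d \<le> infdist (x \<tau>) Z"
      using infdist_antimono that \<open>0 \<le> t\<close> by simp
    then have "c * ?d\<^sup>2 \<le> c * (infdist (x \<tau>) Z)\<^sup>2"
      using \<open>0 \<le> c\<close> by (intro mult_left_mono power_mono) (auto simp: infdist_nonneg)
    then show ?thesis
      using residual[of \<tau>] that \<open>0 \<le> t\<close> by simp
  qed
  then have "(dist (x (t + 1)) z)\<^sup>2 + 2 * (c * ?d\<^sup>2) \<le> (dist (x t) z)\<^sup>2"
    using dist_sq_decrease[OF \<open>z \<in> Z\<close> \<open>0 \<le> t\<close>, of "t + 1"] by simp
  moreover have "?d\<^sup>2 \<le> (dist (x (t + 1)) z)\<^sup>2"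
    using infdist_le[OF \<open>z \<in> Z\<close>] by (intro power_mono) (auto simp: infdist_nonneg)
  ultimately have "(sqrt (1 + 2 * c) * ?d)\<^sup>2 \<le> (dist (x t) z)\<^sup>2"
    using \<open>0 \<le> c\<close> by (simp add: power_mult_distrib algebra_simps)
  then show "sqrt (1 + 2 * c) * ?d \<le> dist (x t) z"
    by (rule power2_le_imp_le) simp
qed

lemma infdist_exp_decay:
  assumes "0 \<le> c" and residual: "\<And>\<tau>. 0 \<le> \<tau> \<Longrightarrow> c * (infdist (x \<tau>) Z)\<^sup>2 \<le> (norm (v \<tau>))\<^sup>2"
    and "0 \<le> t"
  shows "infdist (x t) Z \<le> sqrt (1 + 2 * c) * infdist (x 0) Z * exp (- ln (1 + 2 * c) * t / 2)"
proof -
  have "infdist (x t) Z \<le> sqrt (1 + 2 * c) * infdist (x 0) Z * exp (- ln (sqrt (1 + 2 * c)) * t)"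
    using infdist_antimono infdist_contract[OF assms(1,2)] \<open>0 \<le> c\<close> \<open>0 \<le> t\<close>
    by (intro antimono_geometric_decay) (auto simp: infdist_nonneg)
  also have "ln (sqrt (1 + 2 * c)) = ln (1 + 2 * c) / 2"
    using \<open>0 \<le> c\<close> by (simp add: ln_sqrt)
  finally show ?thesis
    by simp
qed

end

section \<open>The proximal flow\<close>

lemma lower_bound_of_mult_power_eq:
  fixes lam \<rho> R \<theta> :: real
  assumes "lam * \<rho> ^ k = \<theta>" "0 < lam" "0 \<le> \<rho>" "\<rho> \<le> R"
  shows "\<theta> / (R + 1) ^ k \<le> lam"
proof -
  have "\<theta> \<le> lam * (R + 1) ^ k"
    using assms by (metis mult_left_mono power_mono add_increasing2 zero_le_one less_imp_le)
  then show ?thesis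
    using assms(3,4) by (simp add: pos_divide_le_eq)
qed

locale proximal_flow =
  fixes A :: "'a::{real_inner,complete_space} \<Rightarrow> 'a set"
    and x :: "real \<Rightarrow> 'a" and lam :: "real \<Rightarrow> real" and \<theta> :: real and p :: nat
  assumes maxmon: "maximal_monotone A" and zeros_ne: "zeros A \<noteq> {}" and theta_pos: "0 < \<theta>"
    and lam_pos: "\<And>t. 0 \<le> t \<Longrightarrow> 0 < lam t"
    and ode: "\<And>t. 0 \<le> t \<Longrightarrow>
        (x has_vector_derivative (resolvent A (lam t) (x t) - x t)) (at t within {0..})"
    and alg: "\<And>t. 0 \<le> t \<Longrightarrow> lam t * norm (resolvent A (lam t) (x t) - x t) ^ (p - 1) = \<theta>"
begin

definition residual :: "real \<Rightarrow> 'a" where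
  "residual t = resolvent A (lam t) (x t) - x t"

sublocale fejer_flow x residual "zeros A"
  using zeros_ne ode inner_resolvent_residual_le[OF maxmon lam_pos]
  by unfold_locales (simp_all add: residual_def)

lemma step_size_lower_bound:
  obtains lm where "0 < lm" "\<And>t. 0 \<le> t \<Longrightarrow> lm \<le> lam t"
proof -
  obtain z where z: "z \<in> zeros A"
    using zeros_ne by blast
  have bound: "norm (residual t) \<le> dist (x 0) z" if "0 \<le> t" for t
    using norm_velocity_le[OF that z] dist_antimono[OF z order_refl that] by simp
  have "\<theta> / (dist (x 0) z + 1) ^ (p - 1) \<le> lam t" if "0 \<le> t" for t
    using lower_bound_of_mult_power_eq[of "lam t" "norm (residual t)"] alg[OF that] lam_pos[OF that]
      bound[OF that] by (simp add: residual_def)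
  moreover have "0 < \<theta> / (dist (x 0) z + 1) ^ (p - 1)"
    using theta_pos by (simp add: add_nonneg_pos)
  ultimately show ?thesis
    using that by blast
qed

lemma uniform_error_bound:
  assumes "0 \<le> \<kappa>" "0 < \<delta>"
    and EB: "\<And>y. A y \<noteq> {} \<Longrightarrow> infdist 0 (A y) \<le> \<delta> \<Longrightarrow>
        infdist y (zeros A) \<le> \<kappa> * infdist 0 (A y)"
  obtains c where "0 < c" "\<And>t. 0 \<le> t \<Longrightarrow> c * (infdist (x t) (zeros A))\<^sup>2 \<le> (norm (residual t))\<^sup>2"
proof -
  obtain lm where lm: "0 < lm" "\<And>t. 0 \<le> t \<Longrightarrow> lm \<le> lam t"
    using step_size_lower_bound by blast
  define R where "R = infdist (x 0) (zeros A)"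
  have "0 \<le> R"
    by (simp add: R_def infdist_nonneg)
  show ?thesis
  proof (rule that)
    show "0 < min (inverse ((1 + \<kappa> / lm)\<^sup>2)) ((\<delta> * lm / (R + 1))\<^sup>2)"
      using lm(1) \<open>0 \<le> R\<close> assms(1,2) by (simp add: add_pos_nonneg[THEN less_imp_neq, symmetric])
    show "min (inverse ((1 + \<kappa> / lm)\<^sup>2)) ((\<delta> * lm / (R + 1))\<^sup>2) * (infdist (x t) (zeros A))\<^sup>2
        \<le> (norm (residual t))\<^sup>2" if "0 \<le> t" for t
      unfolding residual_def R_def using lm(1) lm(2)[OF that] assms infdist_antimono[OF order_refl that]
      by (intro infdist_zeros_sq_le_resolvent_residual[OF maxmon]) auto
  qed
qed

lemma infdist_zeros_exp_decay:
  assumes "0 \<le> \<kappa>" "0 < \<delta>"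
    and EB: "\<And>y. A y \<noteq> {} \<Longrightarrow> infdist 0 (A y) \<le> \<delta> \<Longrightarrow>
        infdist y (zeros A) \<le> \<kappa> * infdist 0 (A y)"
  obtains L M where "0 < L" "0 \<le> M"
    "\<And>t. 0 \<le> t \<Longrightarrow> infdist (x t) (zeros A) \<le> M * exp (- L * t / 2)"
proof -
  obtain c where "0 < c" "\<And>t. 0 \<le> t \<Longrightarrow> c * (infdist (x t) (zeros A))\<^sup>2 \<le> (norm (residual t))\<^sup>2"
    using uniform_error_bound[OF assms] by blast
  then show ?thesis
    using that[of "ln (1 + 2 * c)" "sqrt (1 + 2 * c) * infdist (x 0) (zeros A)"]
      infdist_exp_decay[of c] by (simp add: infdist_nonneg)
qed

end

theorem theorem3p4:
  fixes A :: "'a::{real_inner, complete_space} \<Rightarrow> 'a set"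
    and x :: "real \<Rightarrow> 'a" and lam :: "real \<Rightarrow> real"
    and \<theta> :: real and p :: nat and \<delta> \<kappa> :: real
  assumes maxmon: "maximal_monotone A"
    and zeros_ne: "zeros A \<noteq> {}"
    and theta_pos: "\<theta> > 0"
    and p_ge: "p \<ge> 1"
    and lam_pos: "\<And>t. t \<ge> 0 \<Longrightarrow> lam t > 0"
    and lam_cont: "continuous_on {0..} lam"
    and ode: "\<And>t. t \<ge> 0 \<Longrightarrow>
        (x has_vector_derivative (resolvent A (lam t) (x t) - x t)) (at t within {0..})"
    and alg: "\<And>t. t \<ge> 0 \<Longrightarrow>
        lam t * norm (resolvent A (lam t) (x t) - x t) ^ (p - 1) = \<theta>"
    and x0: "0 \<notin> A (x 0)"
    and delta_pos: "\<delta> > 0" and kappa_pos: "\<kappa> > 0"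
    and EB: "\<And>y. A y \<noteq> {} \<Longrightarrow> infdist 0 (A y) \<le> \<delta> \<Longrightarrow>
        infdist y (zeros A) \<le> \<kappa> * infdist 0 (A y)"
  shows "\<exists>t0 > 0. \<exists>c > 0. c \<le> 2 * (1 + \<kappa> / lam 0) powr (-2) \<and>
           (\<exists>M. \<forall>t > t0. infdist (x t) (zeros A) \<le> M * exp (- c * t / 2))"
proof -
  interpret proximal_flow A x lam \<theta> p
    using maxmon zeros_ne theta_pos lam_pos ode alg by unfold_locales simp_all
  obtain L M where "0 < L" "0 \<le> M"
    and decay: "\<And>t. 0 \<le> t \<Longrightarrow> infdist (x t) (zeros A) \<le> M * exp (- L * t / 2)"
    using infdist_zeros_exp_decay[OF _ delta_pos EB] kappa_pos by (metis less_imp_le)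
  \<comment> \<open>The decay rate \<open>L\<close> is capped to meet the bound on \<open>c\<close> demanded in the statement.\<close>
  define c where "c = min (2 * (1 + \<kappa> / lam 0) powr (-2)) L"
  have "0 < 1 + \<kappa> / lam 0"
    using lam_pos[of 0] kappa_pos by (simp add: add_pos_pos)
  then have "0 < c"
    using \<open>0 < L\<close> by (simp add: c_def)
  moreover have "infdist (x t) (zeros A) \<le> M * exp (- c * t / 2)" if "1 < t" for t
    using decay[of t] that \<open>0 \<le> M\<close>
    by (auto simp: c_def intro: order_trans[OF _ mult_left_mono])
  ultimately show ?thesis
    by (intro exI[of _ 1] exI[of _ c] exI[of _ M] conjI allI impI) (simp_all add: c_def)
qed

end
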